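(* Let $\{\mathsf{f}(\mathsf{x},n)\}$ be a probability distribution on $\mathbb{Z}^d\times\mathbb{N}$ satisfying the assumptions in the context, and let $\lambda(\xi)$ be the analytic function defined in the context. Then the $d\times d$ matrix $\Xi=\mathrm{Hess}(\lambda)(0)$ is positive definite.
   Context: $\mathbb{N}=\{1,2,\dots\}$. Assumptions: the random vector $(\mathsf{X},\mathsf{T})$ with law $\mathsf{f}$ has a non-degenerate $(d+1)$-dimensional distribution; the random walk with i.i.d. steps of law $\mathsf{f}$ is aperiodic (support not contained in a proper sub-lattice); and there exist $C<\infty,\nu>0$ with $\mathsf{f}(\mathsf{x},n)\le Ce^{-\nu(|\mathsf{x}|+n)}$. Define $F(\xi,\lambda)=\log\sum_{\mathsf{x},n}e^{\mathsf{x}\cdot\xi-\lambda n}\mathsf{f}(\mathsf{x},n)$, analytic near $0\in\mathbb{C}^{d+1}$, and let $\lambda(\xi)$ be the analytic function near $0\in\mathbb{C}^d$ given by the implicit function theorem with $F(\xi,\lambda)=0\Leftrightarrow\lambda=\lambda(\xi)$ near the origin (so $\lambda(0)=0$). *)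

theory Defs
  imports "HOL-Analysis.Analysis"
begin

definition zvec :: "int ^ 'd \<Rightarrow> real ^ 'd" where
  "zvec x = (\<chi> i. real_of_int (x $ i))"

text \<open>The log moment generating function F(xi, lambda), restricted to real arguments.\<close>
definition logF :: "(int ^ 'd \<Rightarrow> nat \<Rightarrow> real) \<Rightarrow> real ^ 'd \<Rightarrow> real \<Rightarrow> real" where
  "logF f \<xi> l = ln (\<Sum>\<^sub>\<infinity>p\<in>UNIV. exp (zvec (fst p) \<bullet> \<xi> - l * real (snd p)) * f (fst p) (snd p))"

inductive_set gen_subgroup :: "'a::ab_group_add set \<Rightarrow> 'a set" for S where
  zero: "0 \<in> gen_subgroup S"
| base: "a \<in> S \<Longrightarrow> a \<in> gen_subgroup S"
| diff: "a \<in> gen_subgroup S \<Longrightarrow> b \<in> gen_subgroup S \<Longrightarrow> a - b \<in> gen_subgroup S"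

definition support :: "(int ^ 'd \<Rightarrow> nat \<Rightarrow> real) \<Rightarrow> ((int ^ 'd) \<times> int) set" where
  "support f = {(x, int n) | x n. f x n > 0}"

definition hessian_at :: "(real ^ 'd \<Rightarrow> real) \<Rightarrow> real ^ 'd \<Rightarrow> real ^ 'd ^ 'd \<Rightarrow> bool" where
  "hessian_at lam \<xi>0 H \<longleftrightarrow>
     (\<exists>U. open U \<and> \<xi>0 \<in> U \<and> (\<forall>\<xi>\<in>U. lam differentiable (at \<xi>)) \<and>
       ((\<lambda>\<xi>. \<chi> i. frechet_derivative lam (at \<xi>) (axis i 1)) has_derivative (\<lambda>h. H *v h)) (at \<xi>0))"

definition pos_def :: "real ^ 'd ^ 'd \<Rightarrow> bool" where
  "pos_def H \<longleftrightarrow> (\<forall>v. v \<noteq> 0 \<longrightarrow> v \<bullet> (H *v v) > 0)"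

end

(*
  With Psi(xi, l) = sum of f(x, n) exp(x . xi - l n), the exponent lambda is the solution of
  Psi(xi, lambda(xi)) = 1. Exponential tails allow differentiating Psi under the sum, so implicit
  differentiation gives grad lambda = E[X] / E[T] for the tilted law f(x, n) exp(x . xi - lambda(xi) n).
  Differentiating once more yields v . Xi v = E[(v . X - mu T)^2] / E[T] with mu = grad lambda . v,
  and the numerator is positive because, by nondegeneracy, v . X - mu T does not vanish on the
  support of f.
*)

theory Submission
  imports Defs
begin

section \<open>Exponential summability on the lattice\<close>

lemma sum_power_le_geometric:
  fixes q :: real
  assumes "0 \<le> q" "q < 1" "finite J"
  shows "(\<Sum>j\<in>J. q ^ j) \<le> 1 / (1 - q)"
proof -
  have "(\<Sum>j\<in>J. q ^ j) \<le> (\<Sum>j. q ^ j)"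
    by (rule sum_le_suminf) (use assms in \<open>auto intro: summable_geometric\<close>)
  also have "\<dots> = 1 / (1 - q)"
    using assms by (simp add: suminf_geometric)
  finally show ?thesis .
qed

lemma sum_exp_neg_nat_le:
  fixes a :: real
  assumes "a > 0" "finite K"
  shows "(\<Sum>k\<in>K. exp (- a * real k)) \<le> 1 / (1 - exp (- a))"
proof -
  have "exp (- a * real k) = exp (- a) ^ k" for k :: nat
    by (simp flip: exp_of_nat_mult)
  then show ?thesis
    using sum_power_le_geometric[of "exp (- a)" K] assms by simp
qed

lemma sum_exp_neg_abs_int_le:
  fixes a :: real
  assumes "a > 0" "finite K"
  shows "(\<Sum>k\<in>K. exp (- a * \<bar>real_of_int k\<bar>)) \<le> 2 / (1 - exp (- a))"
proof -
  let ?g = "\<lambda>k::int. exp (- a * \<bar>real_of_int k\<bar>)"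
  have split: "sum ?g K = sum ?g (K \<inter> {k. k \<ge> 0}) + sum ?g (K \<inter> {k. k < 0})"
    using assms(2) by (subst sum.union_disjoint[symmetric]) (auto intro: sum.cong)
  have "sum ?g (K \<inter> {k. k \<ge> 0}) = (\<Sum>j\<in>nat ` (K \<inter> {k. k \<ge> 0}). exp (- a * real j))"
    by (subst sum.reindex) (auto simp: inj_on_def intro!: sum.cong)
  also have "\<dots> \<le> 1 / (1 - exp (- a))"
    using assms by (intro sum_exp_neg_nat_le) auto
  finally have nonneg_part: "sum ?g (K \<inter> {k. k \<ge> 0}) \<le> 1 / (1 - exp (- a))" .
  have "sum ?g (K \<inter> {k. k < 0}) = (\<Sum>j\<in>(\<lambda>k. nat (- k)) ` (K \<inter> {k. k < 0}). exp (- a * real j))"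
    by (subst sum.reindex) (auto simp: inj_on_def intro!: sum.cong)
  also have "\<dots> \<le> 1 / (1 - exp (- a))"
    using assms by (intro sum_exp_neg_nat_le) auto
  finally have neg_part: "sum ?g (K \<inter> {k. k < 0}) \<le> 1 / (1 - exp (- a))" .
  show ?thesis
    using split nonneg_part neg_part by simp
qed

lemma exp_neg_norm_zvec_le_prod:
  fixes x :: "int ^ 'd::finite"
  assumes "\<epsilon> \<ge> 0"
  shows "exp (- \<epsilon> * norm (zvec x)) \<le> (\<Prod>i\<in>UNIV. exp (- (\<epsilon> / CARD('d)) * \<bar>real_of_int (x $ i)\<bar>))"
proof -
  have "\<epsilon> / CARD('d) * \<bar>real_of_int (x $ i)\<bar> \<le> \<epsilon> / CARD('d) * norm (zvec x)" for i
    using assms component_le_norm_cart[of "zvec x" i] by (intro mult_left_mono) (auto simp: zvec_def)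
  then have "(\<Sum>i\<in>UNIV. \<epsilon> / CARD('d) * \<bar>real_of_int (x $ i)\<bar>) \<le> (\<Sum>i\<in>(UNIV::'d set). \<epsilon> / CARD('d) * norm (zvec x))"
    by (rule sum_mono)
  also have "\<dots> = \<epsilon> * norm (zvec x)"
    by simp
  finally have "exp (- \<epsilon> * norm (zvec x)) \<le> exp (\<Sum>i\<in>UNIV. - (\<epsilon> / CARD('d)) * \<bar>real_of_int (x $ i)\<bar>)"
    by (simp add: sum_negf)
  also have "\<dots> = (\<Prod>i\<in>UNIV. exp (- (\<epsilon> / CARD('d)) * \<bar>real_of_int (x $ i)\<bar>))"
    by (simp add: exp_sum)
  finally show ?thesis .
qed

lemma sum_exp_neg_norm_zvec_bounded:
  fixes \<epsilon> :: real
  assumes "\<epsilon> > 0"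
  obtains S where "\<And>F::(int ^ 'd::finite) set. finite F \<Longrightarrow> (\<Sum>x\<in>F. exp (- \<epsilon> * norm (zvec x))) \<le> S"
proof
  define a where "a = \<epsilon> / CARD('d)"
  have a: "a > 0"
    using assms by (simp add: a_def)
  define h where "h k = exp (- a * \<bar>real_of_int k\<bar>)" for k :: int
  define S1 where "S1 = 2 / (1 - exp (- a))"
  have h_sum: "sum h K \<le> S1" if "finite K" for K
    using sum_exp_neg_abs_int_le[OF a that] by (simp add: h_def S1_def)
  fix F :: "(int ^ 'd) set"
  assume F: "finite F"
  define K where "K = (\<Union>i. (\<lambda>x. x $ i) ` F)"
  have K: "finite K"
    using F by (auto simp: K_def)
  have box: "F \<subseteq> vec_lambda ` PiE UNIV (\<lambda>_. K)"
  proof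
    fix x assume "x \<in> F"
    then have "(\<lambda>i. x $ i) \<in> PiE UNIV (\<lambda>_. K)"
      by (auto simp: K_def)
    then show "x \<in> vec_lambda ` PiE UNIV (\<lambda>_. K)"
      by (metis image_eqI vec_lambda_eta)
  qed
  have "exp (- \<epsilon> * norm (zvec x)) \<le> (\<Prod>i\<in>UNIV. h (x $ i))" for x :: "int ^ 'd"
    using exp_neg_norm_zvec_le_prod[of \<epsilon> x] assms by (simp add: h_def a_def)
  then have "(\<Sum>x\<in>F. exp (- \<epsilon> * norm (zvec x))) \<le> (\<Sum>x\<in>F. \<Prod>i\<in>UNIV. h (x $ i))"
    by (rule sum_mono)
  also have "\<dots> \<le> (\<Sum>x\<in>vec_lambda ` PiE (UNIV::'d set) (\<lambda>_. K). \<Prod>i\<in>UNIV. h (x $ i))"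
    by (rule sum_mono2[OF _ box]) (auto simp: K h_def finite_PiE prod_nonneg)
  also have "\<dots> = (\<Sum>g\<in>PiE (UNIV::'d set) (\<lambda>_. K). \<Prod>i\<in>UNIV. h (g i))"
    by (subst sum.reindex) (auto simp: inj_on_def vec_lambda_inject)
  also have "\<dots> = (\<Prod>i\<in>(UNIV::'d set). sum h K)"
    using K by (intro prod_sum_PiE[symmetric]) auto
  also have "\<dots> \<le> S1 ^ CARD('d)"
    using h_sum[OF K] by (simp add: h_def power_mono sum_nonneg)
  finally show "(\<Sum>x\<in>F. exp (- \<epsilon> * norm (zvec x))) \<le> S1 ^ CARD('d)" .
qed

lemma summable_on_exp_neg_lattice:
  fixes \<epsilon> :: real
  assumes "\<epsilon> > 0"
  shows "(\<lambda>p::(int ^ 'd::finite) \<times> nat. exp (- \<epsilon> * (norm (zvec (fst p)) + real (snd p)))) summable_on UNIV"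
proof (rule nonneg_bdd_above_summable_on)
  obtain S1 where S1: "\<And>F::(int ^ 'd) set. finite F \<Longrightarrow> (\<Sum>x\<in>F. exp (- \<epsilon> * norm (zvec x))) \<le> S1"
    using sum_exp_neg_norm_zvec_bounded[OF assms] by blast
  define S2 where "S2 = 1 / (1 - exp (- \<epsilon>))"
  have S2: "(\<Sum>n\<in>N. exp (- \<epsilon> * real n)) \<le> S2" if "finite N" for N
    using sum_exp_neg_nat_le[OF assms that] by (simp add: S2_def)
  show "bdd_above (sum (\<lambda>p::(int ^ 'd) \<times> nat. exp (- \<epsilon> * (norm (zvec (fst p)) + real (snd p)))) ` {F. F \<subseteq> UNIV \<and> finite F})"
  proof (rule bdd_aboveI2)
    fix F :: "((int ^ 'd) \<times> nat) set"
    assume "F \<in> {F. F \<subseteq> UNIV \<and> finite F}"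
    then have F: "finite F" by simp
    have "(\<Sum>p\<in>F. exp (- \<epsilon> * (norm (zvec (fst p)) + real (snd p))))
        \<le> (\<Sum>p\<in>fst ` F \<times> snd ` F. exp (- \<epsilon> * (norm (zvec (fst p)) + real (snd p))))"
      using F by (intro sum_mono2) force+
    also have "\<dots> = (\<Sum>p\<in>fst ` F \<times> snd ` F. exp (- \<epsilon> * norm (zvec (fst p))) * exp (- \<epsilon> * real (snd p)))"
      by (simp add: algebra_simps flip: exp_add)
    also have "\<dots> = (\<Sum>x\<in>fst ` F. exp (- \<epsilon> * norm (zvec x))) * (\<Sum>n\<in>snd ` F. exp (- \<epsilon> * real n))"
      unfolding sum_product sum.cartesian_product by (simp add: case_prod_beta)
    also have "\<dots> \<le> S1 * S2"
      using S1[of "{}"] by (intro mult_mono S1 S2) (auto simp: F intro: sum_nonneg)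
    finally show "(\<Sum>p\<in>F. exp (- \<epsilon> * (norm (zvec (fst p)) + real (snd p)))) \<le> S1 * S2" .
  qed
qed auto

section \<open>Laplace sums with exponential moments\<close>

definition step_vec :: "(int ^ 'd::finite) \<times> nat \<Rightarrow> (real ^ 'd) \<times> real" where
  "step_vec p = (zvec (fst p), - real (snd p))"

text \<open>With \<open>c = f\<close> and \<open>z = (\<xi>, l)\<close> this is \<open>exp (F (\<xi>, l))\<close>; other weights \<open>c\<close> give the
  moment sums that appear in its derivatives.\<close>
definition laplace_sum :: "((int ^ 'd::finite) \<times> nat \<Rightarrow> real) \<Rightarrow> (real ^ 'd) \<times> real \<Rightarrow> real" where
  "laplace_sum c z = (\<Sum>\<^sub>\<infinity>p. c p * exp (step_vec p \<bullet> z))"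

definition exp_moments :: "((int ^ 'd::finite) \<times> nat \<Rightarrow> real) \<Rightarrow> real \<Rightarrow> bool" where
  "exp_moments c r \<longleftrightarrow>
     (\<forall>\<rho>. 0 \<le> \<rho> \<longrightarrow> \<rho> < r \<longrightarrow> (\<lambda>p. \<bar>c p\<bar> * exp (norm (step_vec p) * \<rho>)) summable_on UNIV)"

lemma norm_step_vec_le: "norm (step_vec p) \<le> norm (zvec (fst p)) + real (snd p)"
  using norm_Pair_le[of "zvec (fst p)" "- real (snd p)"] by (simp add: step_vec_def)

lemma exp_moments_of_tail_bound:
  fixes c :: "(int ^ 'd::finite) \<times> nat \<Rightarrow> real"
  assumes "\<nu> > 0" and tail: "\<And>p. \<bar>c p\<bar> \<le> C * exp (- \<nu> * (norm (zvec (fst p)) + real (snd p)))"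
  shows "exp_moments c \<nu>"
  unfolding exp_moments_def
proof (intro allI impI)
  fix \<rho> :: real
  assume \<rho>: "0 \<le> \<rho>" "\<rho> < \<nu>"
  let ?s = "\<lambda>p::(int ^ 'd) \<times> nat. norm (zvec (fst p)) + real (snd p)"
  have "(\<lambda>p. C * exp (- (\<nu> - \<rho>) * ?s p)) summable_on UNIV"
    using \<rho> by (intro summable_on_cmult_right summable_on_exp_neg_lattice) simp
  then show "(\<lambda>p. \<bar>c p\<bar> * exp (norm (step_vec p) * \<rho>)) summable_on UNIV"
  proof (rule summable_on_comparison_test)
    fix p :: "(int ^ 'd) \<times> nat"
    have "exp (norm (step_vec p) * \<rho>) \<le> exp (?s p * \<rho>)"
      using mult_right_mono[OF norm_step_vec_le \<rho>(1)] by simp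
    moreover have "0 \<le> C * exp (- \<nu> * ?s p)"
      using order.trans[OF abs_ge_zero tail] .
    ultimately have "\<bar>c p\<bar> * exp (norm (step_vec p) * \<rho>) \<le> C * exp (- \<nu> * ?s p) * exp (?s p * \<rho>)"
      by (intro mult_mono tail) auto
    also have "\<dots> = C * exp (- (\<nu> - \<rho>) * ?s p)"
      by (simp add: mult.assoc algebra_simps flip: exp_add)
    finally show "\<bar>c p\<bar> * exp (norm (step_vec p) * \<rho>) \<le> C * exp (- (\<nu> - \<rho>) * ?s p)" .
  qed auto
qed

lemma exp_moments_dominated:
  fixes c d :: "(int ^ 'd::finite) \<times> nat \<Rightarrow> real"
  assumes c: "exp_moments c r" and d: "\<And>p. \<bar>d p\<bar> \<le> \<bar>c p\<bar> * (A + B * norm (step_vec p))"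
    and "A \<ge> 0" "B \<ge> 0"
  shows "exp_moments d r"
  unfolding exp_moments_def
proof (intro allI impI)
  fix \<rho> :: real
  assume \<rho>: "0 \<le> \<rho>" "\<rho> < r"
  define \<delta> where "\<delta> = (r - \<rho>) / 2"
  have \<delta>: "\<delta> > 0" "0 \<le> \<rho> + \<delta>" "\<rho> + \<delta> < r"
    using \<rho> by (auto simp: \<delta>_def field_simps)
  have "(\<lambda>p. (A + B / \<delta>) * (\<bar>c p\<bar> * exp (norm (step_vec p) * (\<rho> + \<delta>)))) summable_on UNIV"
    using c \<delta> unfolding exp_moments_def by (intro summable_on_cmult_right) blast
  then show "(\<lambda>p. \<bar>d p\<bar> * exp (norm (step_vec p) * \<rho>)) summable_on UNIV"
  proof (rule summable_on_comparison_test)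
    fix p :: "(int ^ 'd) \<times> nat"
    define t where "t = norm (step_vec p)"
    have "t \<ge> 0"
      by (simp add: t_def)
    \<comment> \<open>the polynomial factor is absorbed by the margin \<open>\<delta>\<close> in the exponent: \<open>t \<le> e\<^sup>\<delta>\<^sup>t / \<delta>\<close>\<close>
    have "\<delta> * t \<le> exp (\<delta> * t)"
      using exp_ge_add_one_self[of "\<delta> * t"] by linarith
    then have t_le: "t \<le> exp (\<delta> * t) / \<delta>"
      using \<delta> by (simp add: field_simps)
    have exp_le: "exp (t * \<rho>) \<le> exp (t * (\<rho> + \<delta>))"
      using \<open>t \<ge> 0\<close> \<delta> by (simp add: mult_left_mono)
    have "\<bar>d p\<bar> * exp (t * \<rho>) \<le> \<bar>c p\<bar> * (A * exp (t * \<rho>) + B * t * exp (t * \<rho>))"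
      using mult_right_mono[OF d[of p], of "exp (t * \<rho>)"] by (simp add: t_def algebra_simps)
    also have "\<dots> \<le> \<bar>c p\<bar> * (A * exp (t * (\<rho> + \<delta>)) + B * (exp (\<delta> * t) / \<delta>) * exp (t * \<rho>))"
      using \<open>t \<ge> 0\<close> \<delta> assms(3,4)
      by (intro mult_left_mono add_mono mult_right_mono t_le exp_le) auto
    also have "\<dots> = (A + B / \<delta>) * (\<bar>c p\<bar> * exp (t * (\<rho> + \<delta>)))"
      using \<delta> by (simp add: field_simps distrib_left flip: exp_add)
    finally show "\<bar>d p\<bar> * exp (norm (step_vec p) * \<rho>)
        \<le> (A + B / \<delta>) * (\<bar>c p\<bar> * exp (norm (step_vec p) * (\<rho> + \<delta>)))"
      by (simp add: t_def)
  qed auto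
qed

lemma exp_moments_mult_inner:
  fixes c :: "(int ^ 'd::finite) \<times> nat \<Rightarrow> real"
  shows "exp_moments c r \<Longrightarrow> exp_moments (\<lambda>p. c p * (step_vec p \<bullet> v)) r"
proof (rule exp_moments_dominated[where A = 0 and B = "norm v"])
  fix p :: "(int ^ 'd) \<times> nat"
  show "\<bar>c p * (step_vec p \<bullet> v)\<bar> \<le> \<bar>c p\<bar> * (0 + norm v * norm (step_vec p))"
    using Cauchy_Schwarz_ineq2[of "step_vec p" v] by (simp add: abs_mult mult.commute mult_left_mono)
qed auto

lemma exp_moments_mult_norm: "exp_moments c r \<Longrightarrow> exp_moments (\<lambda>p. c p * norm (step_vec p)) r"
  by (rule exp_moments_dominated[where A = 0 and B = 1]) (auto simp: abs_mult)

lemma exp_moments_mult_time: "exp_moments c r \<Longrightarrow> exp_moments (\<lambda>p. c p * real (snd p)) r"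
  by (rule exp_moments_dominated[where A = 0 and B = 1])
    (auto simp: abs_mult step_vec_def intro!: mult_left_mono order.trans[OF _ norm_snd_le])

lemma exp_moments_cmult: "exp_moments c r \<Longrightarrow> exp_moments (\<lambda>p. a * c p) r"
  by (rule exp_moments_dominated[where A = "\<bar>a\<bar>" and B = 0]) (auto simp: abs_mult)

lemma exp_moments_add:
  assumes "exp_moments c r" "exp_moments d r"
  shows "exp_moments (\<lambda>p. c p + d p) r"
  unfolding exp_moments_def
proof (intro allI impI)
  fix \<rho> :: real
  assume "0 \<le> \<rho>" "\<rho> < r"
  then have "(\<lambda>p. \<bar>c p\<bar> * exp (norm (step_vec p) * \<rho>) + \<bar>d p\<bar> * exp (norm (step_vec p) * \<rho>)) summable_on UNIV"
    using assms unfolding exp_moments_def by (intro summable_on_add) auto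
  then show "(\<lambda>p. \<bar>c p + d p\<bar> * exp (norm (step_vec p) * \<rho>)) summable_on UNIV"
    by (rule summable_on_comparison_test)
      (auto simp flip: distrib_right intro: mult_right_mono abs_triangle_ineq)
qed

lemma exp_moments_sum:
  assumes "finite I" "\<And>i. i \<in> I \<Longrightarrow> exp_moments (c i) r"
  shows "exp_moments (\<lambda>p. \<Sum>i\<in>I. c i p) r"
  using assms
proof (induction I rule: finite_induct)
  case empty
  then show ?case
    by (simp add: exp_moments_def)
qed (auto intro!: exp_moments_add)

lemma exp_moments_summable:
  assumes "exp_moments c r" "norm z < r"
  shows "(\<lambda>p. c p * exp (step_vec p \<bullet> z)) summable_on UNIV"
proof (rule abs_summable_summable)
  have "(\<lambda>p. \<bar>c p\<bar> * exp (norm (step_vec p) * norm z)) summable_on UNIV"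
    using assms unfolding exp_moments_def by auto
  then show "(\<lambda>p. norm (c p * exp (step_vec p \<bullet> z))) summable_on UNIV"
    by (rule summable_on_comparison_test) (auto simp: abs_mult intro!: mult_left_mono norm_cauchy_schwarz)
qed

lemma laplace_sum_add:
  assumes "exp_moments c r" "exp_moments d r" "norm z < r"
  shows "laplace_sum (\<lambda>p. c p + d p) z = laplace_sum c z + laplace_sum d z"
  unfolding laplace_sum_def distrib_right
  using assms by (intro infsum_add exp_moments_summable)

lemma laplace_sum_cmult: "laplace_sum (\<lambda>p. a * c p) z = a * laplace_sum c z"
  unfolding laplace_sum_def mult.assoc by (rule infsum_cmult_right')

lemma laplace_sum_diff:
  assumes "exp_moments c r" "exp_moments d r" "norm z < r"
  shows "laplace_sum (\<lambda>p. c p - d p) z = laplace_sum c z - laplace_sum d z"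
  using laplace_sum_add[of c r "\<lambda>p. (- 1) * d p" z] exp_moments_cmult[of d r "- 1"]
    laplace_sum_cmult[of "- 1" d z] assms
  by simp

lemma laplace_sum_sum:
  assumes "finite I" "\<And>i. i \<in> I \<Longrightarrow> exp_moments (c i) r" "norm z < r"
  shows "laplace_sum (\<lambda>p. \<Sum>i\<in>I. c i p) z = (\<Sum>i\<in>I. laplace_sum (c i) z)"
  using assms(1,2)
proof (induction I rule: finite_induct)
  case empty
  then show ?case
    by (simp add: laplace_sum_def)
next
  case (insert i I)
  then have "laplace_sum (\<lambda>p. c i p + (\<Sum>i\<in>I. c i p)) z = laplace_sum (c i) z + laplace_sum (\<lambda>p. \<Sum>i\<in>I. c i p) z"
    using assms(3) by (intro laplace_sum_add[where r = r] exp_moments_sum) auto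
  with insert show ?case
    by simp
qed

lemma laplace_sum_inner_sum:
  assumes "exp_moments c r" "norm z < r"
  shows "(\<Sum>i\<in>UNIV. v $ i * laplace_sum (\<lambda>p. c p * zvec (fst p) $ i) z)
       = laplace_sum (\<lambda>p. c p * (zvec (fst p) \<bullet> v)) z"
proof -
  have "exp_moments (\<lambda>p. v $ i * (c p * zvec (fst p) $ i)) r" for i
    using exp_moments_cmult[OF exp_moments_mult_inner[OF assms(1), of "(axis i 1, 0)"], of "v $ i"]
    by (simp add: step_vec_def inner_axis)
  then have "(\<Sum>i\<in>UNIV. laplace_sum (\<lambda>p. v $ i * (c p * zvec (fst p) $ i)) z)
      = laplace_sum (\<lambda>p. \<Sum>i\<in>UNIV. v $ i * (c p * zvec (fst p) $ i)) z"
    using assms(2) by (intro laplace_sum_sum[symmetric]) auto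
  also have "(\<lambda>p. \<Sum>i\<in>UNIV. v $ i * (c p * zvec (fst p) $ i)) = (\<lambda>p. c p * (zvec (fst p) \<bullet> v))"
    by (simp add: inner_vec_def sum_distrib_left mult_ac)
  finally show ?thesis
    by (simp add: laplace_sum_cmult)
qed

lemma laplace_sum_pos:
  assumes "exp_moments c r" "norm z < r" "\<And>p. c p \<ge> 0" "c q > 0"
  shows "laplace_sum c z > 0"
proof -
  have "c q * exp (step_vec q \<bullet> z) \<le> laplace_sum c z"
    using finite_sum_le_infsum[OF exp_moments_summable[OF assms(1,2)], of "{q}"] assms(3)
    by (simp add: laplace_sum_def)
  then show ?thesis
    using assms(4) by (smt (verit) exp_gt_zero mult_pos_pos)
qed

section \<open>Differentiation under the sum\<close>

lemma abs_exp_minus_one_minus_le: "\<bar>exp t - 1 - t\<bar> \<le> t\<^sup>2 * exp \<bar>t\<bar>" for t :: real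
proof -
  obtain s where s: "\<bar>s\<bar> \<le> \<bar>t\<bar>" "exp t = (\<Sum>m<2. t ^ m / fact m) + exp s / fact 2 * t ^ 2"
    using Maclaurin_exp_le[of t 2] by blast
  then have "\<bar>exp t - 1 - t\<bar> = exp s / 2 * t\<^sup>2"
    by (simp add: numeral_2_eq_2)
  also have "\<dots> \<le> exp \<bar>t\<bar> * t\<^sup>2"
  proof (rule mult_right_mono)
    have "exp s \<le> exp \<bar>t\<bar>"
      using s(1) by simp
    then show "exp s / 2 \<le> exp \<bar>t\<bar>"
      using exp_gt_zero[of s] by linarith
  qed simp
  finally show ?thesis
    by (simp add: mult.commute)
qed

lemma exp_inner_remainder_le:
  fixes b z h :: "'a::real_inner"
  assumes "norm z + norm h \<le> \<rho>"
  shows "\<bar>exp (b \<bullet> (z + h)) - exp (b \<bullet> z) - (b \<bullet> h) * exp (b \<bullet> z)\<bar>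
         \<le> (norm b * norm h)\<^sup>2 * exp (norm b * \<rho>)"
proof -
  define t where "t = b \<bullet> h"
  have t: "\<bar>t\<bar> \<le> norm b * norm h"
    unfolding t_def by (rule Cauchy_Schwarz_ineq2)
  have "b \<bullet> z + \<bar>t\<bar> \<le> norm b * norm z + norm b * norm h"
    using norm_cauchy_schwarz[of b z] t by linarith
  also have "\<dots> \<le> norm b * \<rho>"
    using assms by (simp flip: distrib_left add: mult_left_mono)
  finally have exponent: "exp (b \<bullet> z) * exp \<bar>t\<bar> \<le> exp (norm b * \<rho>)"
    by (simp flip: exp_add)
  have "exp (b \<bullet> (z + h)) - exp (b \<bullet> z) - (b \<bullet> h) * exp (b \<bullet> z) = exp (b \<bullet> z) * (exp t - 1 - t)"
    by (simp add: t_def inner_add_right exp_add algebra_simps)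
  then have "\<bar>exp (b \<bullet> (z + h)) - exp (b \<bullet> z) - (b \<bullet> h) * exp (b \<bullet> z)\<bar> = exp (b \<bullet> z) * \<bar>exp t - 1 - t\<bar>"
    by (simp add: abs_mult)
  also have "\<dots> \<le> exp (b \<bullet> z) * (t\<^sup>2 * exp \<bar>t\<bar>)"
    by (intro mult_left_mono abs_exp_minus_one_minus_le) auto
  also have "\<dots> = t\<^sup>2 * (exp (b \<bullet> z) * exp \<bar>t\<bar>)"
    by simp
  also have "\<dots> \<le> (norm b * norm h)\<^sup>2 * exp (norm b * \<rho>)"
    using power_mono[OF t abs_ge_zero, of 2] exponent by (intro mult_mono) auto
  finally show ?thesis .
qed

lemma has_sum_diff:
  fixes f g :: "'a \<Rightarrow> 'b::topological_ab_group_add"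
  assumes "(f has_sum a) A" "(g has_sum b) A"
  shows "((\<lambda>x. f x - g x) has_sum (a - b)) A"
proof -
  have "((\<lambda>x. - g x) has_sum - b) A"
    using assms(2) by (simp add: has_sum_uminus)
  from has_sum_add[OF assms(1) this] show ?thesis
    by simp
qed

lemma laplace_sum_remainder_le:
  fixes c :: "(int ^ 'd::finite) \<times> nat \<Rightarrow> real"
  assumes c: "exp_moments c r" and zh: "norm z + norm h \<le> \<rho>" and "\<rho> < r"
  shows "\<bar>laplace_sum c (z + h) - laplace_sum c z - laplace_sum (\<lambda>p. c p * (step_vec p \<bullet> h)) z\<bar>
         \<le> (norm h)\<^sup>2 * (\<Sum>\<^sub>\<infinity>p. \<bar>c p\<bar> * (norm (step_vec p))\<^sup>2 * exp (norm (step_vec p) * \<rho>))"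
proof -
  have z: "norm z < r" and zh': "norm (z + h) < r" and \<rho>: "0 \<le> \<rho>"
    using zh \<open>\<rho> < r\<close> norm_triangle_ineq[of z h] norm_ge_zero[of z] norm_ge_zero[of h] by linarith+
  let ?R = "\<lambda>p. c p * exp (step_vec p \<bullet> (z + h)) - c p * exp (step_vec p \<bullet> z)
               - c p * (step_vec p \<bullet> h) * exp (step_vec p \<bullet> z)"
  let ?B = "\<lambda>p. (norm h)\<^sup>2 * (\<bar>c p\<bar> * (norm (step_vec p))\<^sup>2 * exp (norm (step_vec p) * \<rho>))"
  have "(\<lambda>p. \<bar>c p * norm (step_vec p) * norm (step_vec p)\<bar> * exp (norm (step_vec p) * \<rho>)) summable_on UNIV"
    using exp_moments_mult_norm[OF exp_moments_mult_norm[OF c]] \<rho> \<open>\<rho> < r\<close>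
    unfolding exp_moments_def by blast
  then have B: "?B summable_on UNIV"
    by (intro summable_on_cmult_right) (simp add: abs_mult power2_eq_square mult_ac)
  have R_le: "\<bar>?R p\<bar> \<le> ?B p" for p
  proof -
    let ?b = "step_vec p"
    have "?R p = c p * (exp (?b \<bullet> (z + h)) - exp (?b \<bullet> z) - (?b \<bullet> h) * exp (?b \<bullet> z))"
      by (simp add: algebra_simps)
    then have "\<bar>?R p\<bar> = \<bar>c p\<bar> * \<bar>exp (?b \<bullet> (z + h)) - exp (?b \<bullet> z) - (?b \<bullet> h) * exp (?b \<bullet> z)\<bar>"
      by (simp add: abs_mult)
    also have "\<dots> \<le> \<bar>c p\<bar> * ((norm ?b * norm h)\<^sup>2 * exp (norm ?b * \<rho>))"
      by (intro mult_left_mono exp_inner_remainder_le zh) simp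
    also have "\<dots> = ?B p"
      by (simp add: power_mult_distrib)
    finally show ?thesis .
  qed
  have R: "(\<lambda>p. norm (?R p)) summable_on UNIV"
    by (rule summable_on_comparison_test[OF B]) (use R_le in auto)
  have "(?R has_sum laplace_sum c (z + h) - laplace_sum c z - laplace_sum (\<lambda>p. c p * (step_vec p \<bullet> h)) z) UNIV"
    unfolding laplace_sum_def
    by (intro has_sum_diff has_sum_infsum exp_moments_summable[OF c zh'] exp_moments_summable[OF c z]
        exp_moments_summable[OF exp_moments_mult_inner[OF c] z])
  then have R_sum: "laplace_sum c (z + h) - laplace_sum c z - laplace_sum (\<lambda>p. c p * (step_vec p \<bullet> h)) z
      = infsum ?R UNIV"
    by (simp add: infsumI)
  have "\<bar>infsum ?R UNIV\<bar> \<le> infsum (\<lambda>p. norm (?R p)) UNIV"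
    using norm_infsum_bound[of ?R UNIV] R by simp
  also have "\<dots> \<le> infsum ?B UNIV"
    using R B R_le by (intro infsum_mono) auto
  also have "\<dots> = (norm h)\<^sup>2 * (\<Sum>\<^sub>\<infinity>p. \<bar>c p\<bar> * (norm (step_vec p))\<^sup>2 * exp (norm (step_vec p) * \<rho>))"
    by (rule infsum_cmult_right')
  finally show ?thesis
    unfolding R_sum .
qed

lemma linear_laplace_sum_inner:
  assumes "exp_moments c r" "norm z < r"
  shows "linear (\<lambda>h. laplace_sum (\<lambda>p. c p * (step_vec p \<bullet> h)) z)"
proof
  fix h k :: "(real ^ 'a) \<times> real"
  have "laplace_sum (\<lambda>p. c p * (step_vec p \<bullet> h) + c p * (step_vec p \<bullet> k)) z
      = laplace_sum (\<lambda>p. c p * (step_vec p \<bullet> h)) z + laplace_sum (\<lambda>p. c p * (step_vec p \<bullet> k)) z"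
    using assms by (intro laplace_sum_add exp_moments_mult_inner)
  then show "laplace_sum (\<lambda>p. c p * (step_vec p \<bullet> (h + k))) z
      = laplace_sum (\<lambda>p. c p * (step_vec p \<bullet> h)) z + laplace_sum (\<lambda>p. c p * (step_vec p \<bullet> k)) z"
    by (simp add: inner_add_right distrib_left)
next
  fix a :: real and h :: "(real ^ 'a) \<times> real"
  show "laplace_sum (\<lambda>p. c p * (step_vec p \<bullet> (a *\<^sub>R h))) z = a *\<^sub>R laplace_sum (\<lambda>p. c p * (step_vec p \<bullet> h)) z"
    using laplace_sum_cmult[of a "\<lambda>p. c p * (step_vec p \<bullet> h)" z] by (simp add: mult_ac)
qed

lemma laplace_sum_has_derivative:
  assumes c: "exp_moments c r" and z: "norm z < r"
  shows "(laplace_sum c has_derivative (\<lambda>h. laplace_sum (\<lambda>p. c p * (step_vec p \<bullet> h)) z)) (at z)"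
  unfolding has_derivative_at_alt
proof (intro conjI allI impI)
  show "bounded_linear (\<lambda>h. laplace_sum (\<lambda>p. c p * (step_vec p \<bullet> h)) z)"
    using linear_laplace_sum_inner[OF assms] by (simp add: linear_conv_bounded_linear)
next
  fix e :: real
  assume e: "e > 0"
  define \<rho> where "\<rho> = (norm z + r) / 2"
  have \<rho>: "norm z < \<rho>" "\<rho> < r"
    using z by (auto simp: \<rho>_def)
  define K where "K = (\<Sum>\<^sub>\<infinity>p. \<bar>c p\<bar> * (norm (step_vec p))\<^sup>2 * exp (norm (step_vec p) * \<rho>))"
  have "K \<ge> 0"
    unfolding K_def by (intro infsum_nonneg) simp
  define d where "d = min (\<rho> - norm z) (e / (K + 1))"
  have "d > 0"
    using \<rho> e \<open>K \<ge> 0\<close> by (simp add: d_def)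
  moreover have "norm (laplace_sum c y - laplace_sum c z - laplace_sum (\<lambda>p. c p * (step_vec p \<bullet> (y - z))) z)
      \<le> e * norm (y - z)" if y: "norm (y - z) < d" for y
  proof -
    define h where "h = y - z"
    have h: "norm z + norm h \<le> \<rho>" "norm h * K \<le> e"
    proof -
      show "norm z + norm h \<le> \<rho>"
        using y by (simp add: h_def d_def)
      have "norm h * K \<le> e / (K + 1) * K"
        using y \<open>K \<ge> 0\<close> by (intro mult_right_mono) (auto simp: h_def d_def)
      also have "\<dots> \<le> e"
        using e \<open>K \<ge> 0\<close> by (simp add: field_simps)
      finally show "norm h * K \<le> e" .
    qed
    have "norm (laplace_sum c (z + h) - laplace_sum c z - laplace_sum (\<lambda>p. c p * (step_vec p \<bullet> h)) z)
        \<le> (norm h)\<^sup>2 * K"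
      unfolding K_def real_norm_def by (rule laplace_sum_remainder_le[OF c h(1) \<rho>(2)])
    also have "\<dots> \<le> e * norm h"
      using mult_left_mono[OF h(2) norm_ge_zero[of h]] by (simp add: power2_eq_square mult_ac)
    finally show ?thesis
      by (simp add: h_def)
  qed
  ultimately show "\<exists>d>0. \<forall>y. norm (y - z) < d \<longrightarrow>
      norm (laplace_sum c y - laplace_sum c z - laplace_sum (\<lambda>p. c p * (step_vec p \<bullet> (y - z))) z)
      \<le> e * norm (y - z)"
    by blast
qed

section \<open>Implicit differentiation\<close>

lemma implicit_increment_le:
  fixes a \<Delta> B M \<epsilon> n :: real
  assumes "\<bar>a + \<Delta> * B\<bar> \<le> \<epsilon> * (n + \<bar>\<Delta>\<bar>)" "\<bar>a\<bar> \<le> M * n" "\<epsilon> \<le> \<bar>B\<bar> / 2" "B \<noteq> 0" "0 \<le> n"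
  shows "\<bar>\<Delta>\<bar> \<le> (2 * M + \<bar>B\<bar>) / \<bar>B\<bar> * n"
proof -
  have "\<bar>\<Delta>\<bar> * \<bar>B\<bar> \<le> \<bar>a\<bar> + \<epsilon> * n + \<epsilon> * \<bar>\<Delta>\<bar>"
    using assms(1) abs_triangle_ineq4[of "a + \<Delta> * B" a] by (simp add: abs_mult algebra_simps)
  moreover have "\<epsilon> * n \<le> \<bar>B\<bar> / 2 * n" "\<epsilon> * \<bar>\<Delta>\<bar> \<le> \<bar>B\<bar> / 2 * \<bar>\<Delta>\<bar>"
    using mult_right_mono[OF assms(3) assms(5)] mult_right_mono[OF assms(3) abs_ge_zero] by auto
  ultimately have "\<bar>\<Delta>\<bar> * \<bar>B\<bar> \<le> 2 * (M * n) + \<bar>B\<bar> * n"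
    using assms(2) by (simp add: algebra_simps)
  then show ?thesis
    using assms(4) by (simp add: field_simps)
qed

lemma implicit_remainder_le:
  fixes a \<Delta> B M \<epsilon> e n :: real
  assumes main: "\<bar>a + \<Delta> * B\<bar> \<le> \<epsilon> * (n + \<bar>\<Delta>\<bar>)" and a: "\<bar>a\<bar> \<le> M * n"
    and B: "B \<noteq> 0" and n: "0 \<le> n" and \<epsilon>: "0 \<le> \<epsilon>" "\<epsilon> \<le> \<bar>B\<bar> / 2"
    and small: "\<epsilon> * (1 + (2 * M + \<bar>B\<bar>) / \<bar>B\<bar>) \<le> e * \<bar>B\<bar>"
  shows "\<bar>\<Delta> + a / B\<bar> \<le> e * n"
proof -
  let ?K = "(2 * M + \<bar>B\<bar>) / \<bar>B\<bar>"
  have "\<bar>\<Delta>\<bar> \<le> ?K * n"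
    by (rule implicit_increment_le[OF main a \<epsilon>(2) B n])
  then have "n + \<bar>\<Delta>\<bar> \<le> (1 + ?K) * n"
    by (simp add: distrib_right)
  then have "\<epsilon> * (n + \<bar>\<Delta>\<bar>) \<le> \<epsilon> * (1 + ?K) * n"
    using mult_left_mono[OF _ \<epsilon>(1)] by (simp add: mult.assoc)
  also have "\<dots> \<le> e * \<bar>B\<bar> * n"
    using small n by (rule mult_right_mono)
  finally have "\<bar>a + \<Delta> * B\<bar> \<le> e * n * \<bar>B\<bar>"
    using main by (simp add: mult_ac)
  moreover have "\<bar>\<Delta> + a / B\<bar> = \<bar>a + \<Delta> * B\<bar> / \<bar>B\<bar>"
    using B by (simp add: field_simps flip: abs_divide)
  ultimately show ?thesis
    using B by (simp add: divide_le_eq)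
qed

lemma implicit_has_derivative:
  fixes Phi :: "'a::real_normed_vector \<times> real \<Rightarrow> real" and lam :: "'a \<Rightarrow> real"
  assumes D: "(Phi has_derivative D) (at (x0, lam x0))"
    and B: "D (0, 1) \<noteq> 0"
    and cont: "continuous (at x0) lam"
    and S: "open S" "x0 \<in> S" "\<And>x. x \<in> S \<Longrightarrow> Phi (x, lam x) = Phi (x0, lam x0)"
  shows "(lam has_derivative (\<lambda>h. - D (h, 0) / D (0, 1))) (at x0)"
  unfolding has_derivative_at_alt
proof (intro conjI allI impI)
  define \<beta> where "\<beta> = \<bar>D (0, 1)\<bar>"
  have \<beta>: "\<beta> > 0"
    using B by (simp add: \<beta>_def)
  have bl: "bounded_linear D"
    using D by (rule has_derivative_bounded_linear)
  show "bounded_linear (\<lambda>h. - D (h, 0) / D (0, 1))"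
    by (intro bounded_linear_minus bounded_linear_compose[OF bounded_linear_divide]
        bounded_linear_compose[OF bl bounded_linear_Pair[OF bounded_linear_ident bounded_linear_zero]])
  have D_split: "D (h, k) = D (h, 0) + k * D (0, 1)" for h k
    using linear_add[OF bounded_linear.linear[OF bl], of "(h, 0)" "k *\<^sub>R (0, 1)"]
      linear_scale[OF bounded_linear.linear[OF bl], of k "(0, 1)"]
    by simp
  obtain M0 where M0: "\<And>v. norm (D v) \<le> norm v * M0"
    using bounded_linear.bounded[OF bl] by blast
  define M where "M = max M0 0"
  have M: "\<bar>D (h, 0)\<bar> \<le> M * norm h" for h
    using M0[of "(h, 0)"] mult_left_mono[of M0 M "norm h"] by (simp add: M_def mult.commute)
  fix e :: real
  assume e: "e > 0"
  define K where "K = (2 * M + \<beta>) / \<beta>"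
  have K: "K \<ge> 0"
    using \<beta> by (simp add: K_def M_def)
  define \<epsilon> where "\<epsilon> = min (\<beta> / 2) (e * \<beta> / (1 + K))"
  have "\<epsilon> > 0"
    using \<beta> e K by (simp add: \<epsilon>_def)
  moreover have "\<epsilon> \<le> \<beta> / 2"
    unfolding \<epsilon>_def by (rule min.cobounded1)
  moreover have "\<epsilon> \<le> e * \<beta> / (1 + K)"
    unfolding \<epsilon>_def by (rule min.cobounded2)
  then have "\<epsilon> * (1 + K) \<le> e * \<beta>"
    using K by (simp add: pos_le_divide_eq)
  ultimately have \<epsilon>: "\<epsilon> > 0" "\<epsilon> \<le> \<beta> / 2" "\<epsilon> * (1 + K) \<le> e * \<beta>"
    by auto
  obtain d1 where d1: "d1 > 0" "\<And>y. norm (y - (x0, lam x0)) < d1 \<Longrightarrow>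
      norm (Phi y - Phi (x0, lam x0) - D (y - (x0, lam x0))) \<le> \<epsilon> * norm (y - (x0, lam x0))"
    using D \<epsilon>(1) unfolding has_derivative_at_alt by blast
  obtain d2 where d2: "d2 > 0" "\<And>x. dist x x0 < d2 \<Longrightarrow> dist (lam x) (lam x0) < d1 / 2"
    using cont d1(1) unfolding continuous_at_eps_delta by (meson half_gt_zero)
  obtain d3 where d3: "d3 > 0" "ball x0 d3 \<subseteq> S"
    using S(1,2) open_contains_ball by blast
  have "norm (lam x - lam x0 - - D (x - x0, 0) / D (0, 1)) \<le> e * norm (x - x0)"
    if x: "norm (x - x0) < min (d1 / 2) (min d2 d3)" for x
  proof -
    define h where "h = x - x0"
    define \<Delta> where "\<Delta> = lam x - lam x0"
    have "\<bar>\<Delta>\<bar> < d1 / 2" "x \<in> S"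
      using x d2(2)[of x] d3(2) by (auto simp: \<Delta>_def dist_norm norm_minus_commute)
    moreover have norm_h\<Delta>: "norm (h, \<Delta>) \<le> norm h + \<bar>\<Delta>\<bar>"
      using norm_Pair_le[of h \<Delta>] by simp
    ultimately have "\<bar>D (h, \<Delta>)\<bar> \<le> \<epsilon> * norm (h, \<Delta>)"
      using d1(2)[of "(x, lam x)"] x S(3) by (simp add: h_def \<Delta>_def)
    also have "\<dots> \<le> \<epsilon> * (norm h + \<bar>\<Delta>\<bar>)"
      using norm_h\<Delta> \<epsilon>(1) by (simp add: mult_left_mono)
    finally have "\<bar>D (h, 0) + \<Delta> * D (0, 1)\<bar> \<le> \<epsilon> * (norm h + \<bar>\<Delta>\<bar>)"
      by (simp add: D_split[of h \<Delta>])
    from implicit_remainder_le[OF this M B norm_ge_zero less_imp_le[OF \<epsilon>(1)]] \<epsilon>(2,3)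
    show ?thesis
      by (simp add: h_def \<Delta>_def K_def \<beta>_def)
  qed
  then show "\<exists>d>0. \<forall>x. norm (x - x0) < d \<longrightarrow> norm (lam x - lam x0 - - D (x - x0, 0) / D (0, 1)) \<le> e * norm (x - x0)"
    using d1(1) d2(1) d3(1) by (intro exI[of _ "min (d1 / 2) (min d2 d3)"]) auto
qed

section \<open>The Hessian of the renewal exponent\<close>

lemma has_derivative_vec_lambda:
  fixes F :: "'i::finite \<Rightarrow> 'a::real_normed_vector \<Rightarrow> real"
  assumes "\<And>i. (F i has_derivative F' i) (at a)"
  shows "((\<lambda>x. \<chi> i. F i x) has_derivative (\<lambda>h. \<chi> i. F' i h)) (at a)"
proof (rule has_derivative_componentwise_within[THEN iffD2], intro ballI)
  fix b :: "real ^ 'i"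
  assume "b \<in> Basis"
  then obtain j where b: "b = axis j 1"
    unfolding Basis_vec_def by auto
  have "(\<lambda>x. (\<chi> i. F i x) \<bullet> b) = F j" "(\<lambda>h. (\<chi> i. F' i h) \<bullet> b) = F' j"
    by (simp_all add: b inner_axis fun_eq_iff)
  then show "((\<lambda>x. (\<chi> i. F i x) \<bullet> b) has_derivative (\<lambda>h. (\<chi> i. F' i h) \<bullet> b)) (at a)"
    using assms by simp
qed

text \<open>The left-hand side is \<open>v \<bullet> (D \<nabla>\<lambda>) v\<close> as produced by the quotient rule from
  \<open>\<nabla>\<lambda> = E[X] / E[T]\<close>; the right-hand side is the variance form \<open>E[(v \<bullet> X - \<mu> T)\<^sup>2] / E[T]\<close>.\<close>
lemma laplace_sum_quadratic_form:
  fixes c :: "(int ^ 'd::finite) \<times> nat \<Rightarrow> real"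
  assumes c: "exp_moments c r" and z: "norm z < r"
    and \<tau>: "laplace_sum (\<lambda>p. c p * real (snd p)) z = \<tau>" "\<tau> \<noteq> 0"
    and \<mu>: "\<mu> * \<tau> = laplace_sum (\<lambda>p. c p * (zvec (fst p) \<bullet> v)) z"
  defines "Y \<equiv> \<lambda>p. step_vec p \<bullet> (v, \<mu>)"
  shows "(\<Sum>i\<in>UNIV. v $ i * ((laplace_sum (\<lambda>p. c p * zvec (fst p) $ i * Y p) z * \<tau>
            - laplace_sum (\<lambda>p. c p * zvec (fst p) $ i) z * laplace_sum (\<lambda>p. c p * real (snd p) * Y p) z)
            / (\<tau> * \<tau>)))
       = laplace_sum (\<lambda>p. c p * (Y p)\<^sup>2) z / \<tau>"
proof -
  have cY: "exp_moments (\<lambda>p. c p * Y p) r"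
    unfolding Y_def by (rule exp_moments_mult_inner[OF c])
  let ?S = "laplace_sum (\<lambda>p. c p * real (snd p) * Y p) z"
  have "(\<Sum>i\<in>UNIV. v $ i * ((laplace_sum (\<lambda>p. c p * zvec (fst p) $ i * Y p) z * \<tau>
            - laplace_sum (\<lambda>p. c p * zvec (fst p) $ i) z * ?S) / (\<tau> * \<tau>)))
      = ((\<Sum>i\<in>UNIV. v $ i * laplace_sum (\<lambda>p. c p * zvec (fst p) $ i * Y p) z) * \<tau>
         - (\<Sum>i\<in>UNIV. v $ i * laplace_sum (\<lambda>p. c p * zvec (fst p) $ i) z) * ?S) / (\<tau> * \<tau>)"
    by (simp add: sum_divide_distrib[symmetric] sum_subtractf[symmetric] sum_distrib_left
        sum_distrib_right right_diff_distrib mult_ac)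
  also have "(\<Sum>i\<in>UNIV. v $ i * laplace_sum (\<lambda>p. c p * zvec (fst p) $ i * Y p) z)
      = laplace_sum (\<lambda>p. c p * Y p * (zvec (fst p) \<bullet> v)) z"
    using laplace_sum_inner_sum[OF cY z, of v] by (simp add: mult_ac)
  also have "(\<Sum>i\<in>UNIV. v $ i * laplace_sum (\<lambda>p. c p * zvec (fst p) $ i) z) = \<mu> * \<tau>"
    using laplace_sum_inner_sum[OF c z, of v] \<mu> by simp
  also have "(laplace_sum (\<lambda>p. c p * Y p * (zvec (fst p) \<bullet> v)) z * \<tau> - \<mu> * \<tau> * ?S) / (\<tau> * \<tau>)
      = (laplace_sum (\<lambda>p. c p * Y p * (zvec (fst p) \<bullet> v)) z - \<mu> * ?S) / \<tau>"
    using \<tau>(2) by (simp add: field_simps)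
  also have "\<dots> = laplace_sum (\<lambda>p. c p * Y p * (zvec (fst p) \<bullet> v) - \<mu> * (c p * real (snd p) * Y p)) z / \<tau>"
  proof -
    have "exp_moments (\<lambda>p. c p * Y p * (zvec (fst p) \<bullet> v)) r"
      using exp_moments_mult_inner[OF cY, of "(v, 0)"] by (simp add: step_vec_def)
    moreover have "exp_moments (\<lambda>p. \<mu> * (c p * real (snd p) * Y p)) r"
      unfolding Y_def by (intro exp_moments_cmult exp_moments_mult_inner exp_moments_mult_time c)
    ultimately show ?thesis
      using laplace_sum_diff[OF _ _ z] by (simp add: laplace_sum_cmult)
  qed
  also have "(\<lambda>p. c p * Y p * (zvec (fst p) \<bullet> v) - \<mu> * (c p * real (snd p) * Y p)) = (\<lambda>p. c p * (Y p)\<^sup>2)"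
    by (simp add: Y_def step_vec_def power2_eq_square algebra_simps inner_commute)
  finally show ?thesis .
qed

locale renewal_exponent =
  fixes w :: "(int ^ 'd::finite) \<times> nat \<Rightarrow> real" and r :: real
    and V :: "(real ^ 'd) set" and lam :: "real ^ 'd \<Rightarrow> real"
  assumes nonneg: "\<And>p. w p \<ge> 0"
    and moments: "exp_moments w r"
    and positive_time: "\<exists>p. 0 < w p \<and> 0 < snd p"
    and open_V: "open V"
    and lam_cont: "continuous_on V lam"
    and inside: "\<And>\<xi>. \<xi> \<in> V \<Longrightarrow> norm (\<xi>, lam \<xi>) < r"
    and level: "\<And>\<xi>. \<xi> \<in> V \<Longrightarrow> laplace_sum w (\<xi>, lam \<xi>) = 1"
begin

lemma mean_time_pos:
  assumes "norm z < r"
  shows "laplace_sum (\<lambda>p. w p * real (snd p)) z > 0"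
proof -
  obtain q where "0 < w q" "0 < snd q"
    using positive_time by blast
  then show ?thesis
    using nonneg by (intro laplace_sum_pos[OF exp_moments_mult_time[OF moments] assms, where q = q]) auto
qed

lemma lam_has_derivative:
  assumes "\<xi> \<in> V"
  shows "(lam has_derivative (\<lambda>h. laplace_sum (\<lambda>p. w p * (zvec (fst p) \<bullet> h)) (\<xi>, lam \<xi>)
                                  / laplace_sum (\<lambda>p. w p * real (snd p)) (\<xi>, lam \<xi>))) (at \<xi>)"
proof -
  let ?D = "\<lambda>k. laplace_sum (\<lambda>p. w p * (step_vec p \<bullet> k)) (\<xi>, lam \<xi>)"
  have D01: "?D (0, 1) = - laplace_sum (\<lambda>p. w p * real (snd p)) (\<xi>, lam \<xi>)"
    using laplace_sum_cmult[of "- 1" "\<lambda>p. w p * real (snd p)"] by (simp add: step_vec_def)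
  have "(lam has_derivative (\<lambda>h. - ?D (h, 0) / ?D (0, 1))) (at \<xi>)"
  proof (rule implicit_has_derivative[where S = V])
    show "(laplace_sum w has_derivative ?D) (at (\<xi>, lam \<xi>))"
      by (rule laplace_sum_has_derivative[OF moments inside[OF assms]])
    show "?D (0, 1) \<noteq> 0"
      using D01 mean_time_pos[OF inside[OF assms]] by simp
    show "continuous (at \<xi>) lam"
      using lam_cont open_V assms continuous_on_eq_continuous_at by blast
  qed (use open_V assms level in auto)
  then show ?thesis
    unfolding D01 by (simp add: step_vec_def)
qed

lemma laplace_sum_along_has_derivative:
  assumes "exp_moments c r" "\<xi> \<in> V"
  shows "((\<lambda>\<xi>. laplace_sum c (\<xi>, lam \<xi>)) has_derivative
           (\<lambda>h. laplace_sum (\<lambda>p. c p * (step_vec p \<bullet> (h, frechet_derivative lam (at \<xi>) h))) (\<xi>, lam \<xi>))) (at \<xi>)"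
proof -
  have "lam differentiable (at \<xi>)"
    using lam_has_derivative[OF assms(2)] by (rule differentiableI)
  then have "(lam has_derivative frechet_derivative lam (at \<xi>)) (at \<xi>)"
    by (simp add: frechet_derivative_works)
  then have "((\<lambda>\<xi>. (\<xi>, lam \<xi>)) has_derivative (\<lambda>h. (h, frechet_derivative lam (at \<xi>) h))) (at \<xi>)"
    by (intro has_derivative_Pair has_derivative_ident)
  from has_derivative_compose[OF this laplace_sum_has_derivative[OF assms(1) inside[OF assms(2)]]]
  show ?thesis
    by simp
qed

lemma gradient_eq:
  assumes "\<xi> \<in> V"
  shows "(\<chi> i. frechet_derivative lam (at \<xi>) (axis i 1))
       = (\<chi> i. laplace_sum (\<lambda>p. w p * zvec (fst p) $ i) (\<xi>, lam \<xi>)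
               / laplace_sum (\<lambda>p. w p * real (snd p)) (\<xi>, lam \<xi>))"
  by (simp add: frechet_derivative_at[OF lam_has_derivative[OF assms], symmetric] inner_axis)

lemma hessian_quadratic_form:
  assumes "\<xi>0 \<in> V"
  obtains H where "hessian_at lam \<xi>0 H"
    and "\<And>v. v \<bullet> (H *v v)
          = laplace_sum (\<lambda>p. w p * (step_vec p \<bullet> (v, frechet_derivative lam (at \<xi>0) v))\<^sup>2) (\<xi>0, lam \<xi>0)
            / laplace_sum (\<lambda>p. w p * real (snd p)) (\<xi>0, lam \<xi>0)"
proof -
  let ?z = "(\<xi>0, lam \<xi>0)"
  let ?L = "frechet_derivative lam (at \<xi>0)"
  let ?T = "\<lambda>\<xi>. laplace_sum (\<lambda>p. w p * real (snd p)) (\<xi>, lam \<xi>)"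
  let ?X = "\<lambda>i \<xi>. laplace_sum (\<lambda>p. w p * zvec (fst p) $ i) (\<xi>, lam \<xi>)"
  let ?dT = "\<lambda>h. laplace_sum (\<lambda>p. w p * real (snd p) * (step_vec p \<bullet> (h, ?L h))) ?z"
  let ?dX = "\<lambda>i h. laplace_sum (\<lambda>p. w p * zvec (fst p) $ i * (step_vec p \<bullet> (h, ?L h))) ?z"
  define DG where "DG h = (\<chi> i. (?dX i h * ?T \<xi>0 - ?X i \<xi>0 * ?dT h) / (?T \<xi>0 * ?T \<xi>0))" for h
  have T_pos: "?T \<xi>0 > 0"
    using mean_time_pos[OF inside[OF assms]] .
  have moments_X: "exp_moments (\<lambda>p. w p * zvec (fst p) $ i) r" for i
    using exp_moments_mult_inner[OF moments, of "(axis i 1, 0)"] by (simp add: step_vec_def inner_axis)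
  have "((\<lambda>\<xi>. \<chi> i. ?X i \<xi> / ?T \<xi>) has_derivative DG) (at \<xi>0)"
    unfolding DG_def using T_pos
    by (intro has_derivative_vec_lambda has_derivative_divide' laplace_sum_along_has_derivative
        moments_X exp_moments_mult_time moments assms) auto
  then have grad: "((\<lambda>\<xi>. \<chi> i. frechet_derivative lam (at \<xi>) (axis i 1)) has_derivative DG) (at \<xi>0)"
    by (rule has_derivative_transform_within_open[OF _ open_V assms]) (simp add: gradient_eq)
  define H where "H = matrix DG"
  have H: "(\<lambda>h. H *v h) = DG"
    using has_derivative_linear[OF grad] by (simp add: H_def)
  show thesis
  proof
    show "hessian_at lam \<xi>0 H"
      unfolding hessian_at_def H
      using open_V assms grad lam_has_derivative differentiableI by blast
  next
    fix v :: "real ^ 'd"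
    have "?L v * ?T \<xi>0 = laplace_sum (\<lambda>p. w p * (zvec (fst p) \<bullet> v)) ?z"
      using T_pos by (simp add: frechet_derivative_at[OF lam_has_derivative[OF assms], symmetric])
    from laplace_sum_quadratic_form[OF moments inside[OF assms] refl _ this] T_pos
    show "v \<bullet> (H *v v) = laplace_sum (\<lambda>p. w p * (step_vec p \<bullet> (v, ?L v))\<^sup>2) ?z / ?T \<xi>0"
      by (simp add: H DG_def inner_vec_def mult_ac)
  qed
qed

lemma hessian_pos_def:
  assumes "\<xi>0 \<in> V"
    and nondegenerate: "\<And>a b. (a, b) \<noteq> 0 \<Longrightarrow> \<exists>p. 0 < w p \<and> a \<bullet> zvec (fst p) + b * real (snd p) \<noteq> 0"
  shows "\<exists>H. hessian_at lam \<xi>0 H \<and> pos_def H"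
proof -
  obtain H where H: "hessian_at lam \<xi>0 H"
    and quadratic_form: "\<And>v. v \<bullet> (H *v v)
          = laplace_sum (\<lambda>p. w p * (step_vec p \<bullet> (v, frechet_derivative lam (at \<xi>0) v))\<^sup>2) (\<xi>0, lam \<xi>0)
            / laplace_sum (\<lambda>p. w p * real (snd p)) (\<xi>0, lam \<xi>0)"
    using hessian_quadratic_form[OF assms(1)] by blast
  have "v \<bullet> (H *v v) > 0" if "v \<noteq> 0" for v
  proof -
    obtain q where "0 < w q" "step_vec q \<bullet> (v, frechet_derivative lam (at \<xi>0) v) \<noteq> 0"
      using nondegenerate[of v "- frechet_derivative lam (at \<xi>0) v"] \<open>v \<noteq> 0\<close>
      by (auto simp: step_vec_def inner_commute zero_prod_def)
    moreover have "exp_moments (\<lambda>p. w p * (step_vec p \<bullet> u)\<^sup>2) r" for u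
      using exp_moments_mult_inner[OF exp_moments_mult_inner[OF moments, of u], of u]
      by (simp add: power2_eq_square mult.assoc)
    ultimately have "laplace_sum (\<lambda>p. w p * (step_vec p \<bullet> (v, frechet_derivative lam (at \<xi>0) v))\<^sup>2) (\<xi>0, lam \<xi>0) > 0"
      using nonneg inside[OF assms(1)] by (intro laplace_sum_pos[where q = q]) auto
    then show ?thesis
      using quadratic_form[of v] mean_time_pos[OF inside[OF assms(1)]] by simp
  qed
  then show ?thesis
    using H unfolding pos_def_def by blast
qed

end

lemma logF_eq_ln_laplace_sum: "logF f \<xi> l = ln (laplace_sum (\<lambda>p. f (fst p) (snd p)) (\<xi>, l))"
  unfolding logF_def laplace_sum_def
  by (rule arg_cong[where f = ln], rule infsum_cong) (simp add: step_vec_def algebra_simps)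

theorem lemma4:
  fixes f :: "int ^ 'd::finite \<Rightarrow> nat \<Rightarrow> real"
    and lam :: "real ^ 'd \<Rightarrow> real"
    and C \<nu> :: real
    and U :: "(real ^ 'd) set"
  assumes nonneg: "\<And>x n. f x n \<ge> 0"
    and no_zero_time: "\<And>x. f x 0 = 0"
    and prob: "((\<lambda>p. f (fst p) (snd p)) has_sum 1) UNIV"
    and nondegenerate: "\<And>(a :: real ^ 'd) (b :: real) (c :: real).
          (a, b) \<noteq> 0 \<Longrightarrow> \<exists>x n. f x n > 0 \<and> a \<bullet> zvec x + b * real n \<noteq> c"
    and aperiodic: "gen_subgroup (support f) = UNIV"
    and tail: "\<nu> > 0" "\<And>x n. f x n \<le> C * exp (- \<nu> * (norm (zvec x) + real n))"
    and U: "open U" "0 \<in> U"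
    and lam_cont: "continuous_on U lam"
    and lam0: "lam 0 = 0"
    and lam_eq: "\<And>\<xi>. \<xi> \<in> U \<Longrightarrow> logF f \<xi> (lam \<xi>) = 0"
  shows "\<exists>H. hessian_at lam 0 H \<and> pos_def H"
proof -
  define w where "w p = f (fst p) (snd p)" for p :: "(int ^ 'd) \<times> nat"
  have moments: "exp_moments w \<nu>"
    using tail nonneg by (intro exp_moments_of_tail_bound[where C = C]) (simp_all add: w_def)
  have w_nondegenerate: "\<exists>p. 0 < w p \<and> a \<bullet> zvec (fst p) + b * real (snd p) \<noteq> 0" if "(a, b) \<noteq> 0" for a b
    using nondegenerate[OF that, of 0] by (auto simp: w_def)
  obtain p1 where positive_time: "0 < w p1" "0 < snd p1"
    using w_nondegenerate[of 0 1] no_zero_time by (auto simp: zero_prod_def w_def intro: gr0I)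
  define V where "V = U \<inter> (\<lambda>\<xi>. (\<xi>, lam \<xi>)) -` ball 0 \<nu>"
  have "open V"
    unfolding V_def using lam_cont
    by (intro continuous_open_preimage[OF _ U(1) open_ball] continuous_on_Pair continuous_on_id)
  have "0 \<in> V"
    using U(2) tail(1) lam0 by (simp add: V_def)
  have level: "laplace_sum w (\<xi>, lam \<xi>) = 1" if "\<xi> \<in> V" for \<xi>
    using lam_eq[of \<xi>] laplace_sum_pos[OF moments, of "(\<xi>, lam \<xi>)" p1] that positive_time nonneg
    by (auto simp: V_def logF_eq_ln_laplace_sum w_def[abs_def])
  interpret renewal_exponent w \<nu> V lam
    using nonneg moments positive_time \<open>open V\<close> lam_cont level
    by unfold_locales (auto simp: w_def V_def intro: continuous_on_subset)
  show ?thesis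
    by (rule hessian_pos_def[OF \<open>0 \<in> V\<close> w_nondegenerate])
qed

end
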